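(* For all integers $n>1$ and $i\ge1$, and every primitive $n$-th root of unity $\omega_n$, $S_n(\omega_n^i)=S_{\gcd(s_n,i)}(1)$ and $G_n(\omega_n^i)=G_{\gcd(g_n,i)}(1)$.
   Context: $\Phi_k(q)$ is the $k$-th cyclotomic polynomial. For $n>1$ let $s_n$ be the smallest prime factor of $n$ and $g_n$ the greatest prime factor of $n$. Define $S_1(q)=G_1(q)=\Phi_1(q)=q-1$, and for $n>1$, $S_n(q)=\Phi_{s_n}(q^{n/s_n})$ and $G_n(q)=\Phi_{g_n}(q^{n/g_n})$. *)

theory Defs
  imports "HOL-Computational_Algebra.Computational_Algebra" "HOL-Analysis.Analysis"
begin

definition cyclotomic :: "nat \<Rightarrow> complex poly" where
  "cyclotomic k = (\<Prod>j\<in>{j\<in>{1..k}. coprime j k}. [:- cis (2 * pi * real j / real k), 1:])"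

definition primitive_root_unity :: "nat \<Rightarrow> complex \<Rightarrow> bool" where
  "primitive_root_unity n w \<longleftrightarrow> n > 0 \<and> w ^ n = 1 \<and> (\<forall>k. 0 < k \<and> k < n \<longrightarrow> w ^ k \<noteq> 1)"

definition spf :: "nat \<Rightarrow> nat" where "spf n = Min (prime_factors n)"
definition gpf :: "nat \<Rightarrow> nat" where "gpf n = Max (prime_factors n)"

definition S_fun :: "nat \<Rightarrow> complex \<Rightarrow> complex" where
  "S_fun n q = (if n = 1 then poly (cyclotomic 1) q
                else poly (cyclotomic (spf n)) (q ^ (n div spf n)))"

definition G_fun :: "nat \<Rightarrow> complex \<Rightarrow> complex" where
  "G_fun n q = (if n = 1 then poly (cyclotomic 1) q
                else poly (cyclotomic (gpf n)) (q ^ (n div gpf n)))"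

end

theory Submission
  imports Defs
begin

(* For a prime p, Phi_p(X) is the product of X - z over the p-th roots of unity z other than 1,
   i.e. (X^p - 1) / (X - 1) = 1 + X + ... + X^(p-1); so at a p-th root of unity z it takes the
   value p if z = 1 and 0 otherwise. If p divides n and w is a primitive n-th root of unity, then
   z = w^(i n / p) is a p-th root of unity, and z = 1 iff p divides i. On the other side,
   gcd(p, i) is p or 1 according to whether p divides i, and Phi_p(1) = p, Phi_1(1) = 0. *)

lemma cyclotomic_prime:
  assumes "prime p"
  shows "cyclotomic p = (\<Prod>z\<in>{z. z ^ p = 1} - {1}. [:- z, 1:])"
proof -
  have p_pos: "p > 0"
    using assms prime_gt_0_nat by blast
  have coprime_iff: "{j\<in>{1..p}. coprime j p} = {1..<p}"
  proof safe
    fix j assume "j \<in> {1..p}" "coprime j p"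
    then show "j \<in> {1..<p}"
      using assms by (auto simp: le_less prime_gt_1_nat)
  next
    fix j assume "j \<in> {1..<p}"
    then have "\<not> p dvd j"
      by (auto dest: dvd_imp_le)
    then show "coprime j p"
      using assms prime_imp_coprime coprime_commute by blast
  qed auto
  have "bij_betw (\<lambda>k. cis (2 * pi * real k / real p)) ({..<p} - {0}) ({z. z ^ p = 1} - {1})"
    using bij_betw_DiffI[OF Complex.bij_betw_roots_unity[OF p_pos], of "{0}" "{1}"] p_pos
    by (simp add: bij_betw_singletonI)
  moreover have "{..<p} - {0} = {1..<p}"
    by auto
  ultimately have "bij_betw (\<lambda>k. cis (2 * pi * real k / real p)) {1..<p} ({z. z ^ p = 1} - {1})"
    by simp
  then show ?thesis
    unfolding cyclotomic_def coprime_iff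
    using prod.reindex_bij_betw[of _ _ _ "\<lambda>z. [:- z, 1:]"] by simp
qed

lemma prod_roots_unity_linear_factors:
  assumes "n > 0"
  shows "(\<Prod>z\<in>{z::complex. z ^ n = 1}. [:- z, 1:]) = [:0, 1:] ^ n - 1"
    (is "?P = ?Q")
proof -
  let ?R = "{z::complex. z ^ n = 1}"
  have finite_R: "finite ?R"
    using finite_roots_unity assms by auto
  have card_R: "card ?R = n"
    using card_roots_unity_eq[OF assms] .
  have deg_P: "degree ?P = n"
    by (subst degree_prod_eq_sum_degree) (auto simp: card_R)
  have lead_P: "lead_coeff ?P = 1"
    by (simp add: lead_coeff_prod)
  have deg_Q: "degree ?Q \<le> n"
    by (rule degree_diff_le) (simp_all add: degree_linear_power)
  have lead_Q: "coeff ?Q n = 1"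
    using assms by (simp add: coeff_diff coeff_linear_power)
  show ?thesis
  proof (rule poly_eqI_degree_lead_coeff[of _ n _ ?R])
    fix z assume "z \<in> ?R"
    then show "poly ?P z = poly ?Q z"
      using finite_R by (auto simp: poly_prod intro!: prod_zero)
  qed (use card_R deg_P deg_Q lead_P lead_Q in auto)
qed

lemma poly_cyclotomic_prime_at_1:
  assumes "prime p"
  shows "poly (cyclotomic p) 1 = of_nat p"
proof -
  have p_pos: "p > 0"
    using assms prime_gt_0_nat by blast
  let ?R = "{z::complex. z ^ p = 1}"
  let ?P = "\<Prod>z\<in>?R - {1}. [:- z, 1:]"
  have "finite ?R"
    using finite_roots_unity p_pos by auto
  then have "[:- 1, 1:] * ?P = (\<Prod>z\<in>?R. [:- z, 1:])"
    using prod.remove[of ?R 1 "\<lambda>z. [:- z, 1:]"] by simp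
  also have "\<dots> = [:0, 1:] ^ p - 1"
    by (rule prod_roots_unity_linear_factors[OF p_pos])
  also have "\<dots> = ([:0, 1:] - 1) * (\<Sum>i<p. [:0, 1:] ^ i)"
    by (rule power_diff_1_eq)
  also have "[:0, 1:] - 1 = [:- 1, 1::complex:]"
    by (simp add: one_pCons)
  finally have "[:- 1, 1:] * ?P = [:- 1, 1:] * (\<Sum>i<p. [:0, 1:] ^ i)" .
  then have "?P = (\<Sum>i<p. [:0, 1:] ^ i)"
    by (subst (asm) mult_left_cancel) auto
  then show ?thesis
    using cyclotomic_prime[OF assms] by (simp add: poly_sum)
qed

lemma poly_cyclotomic_prime_root_unity:
  assumes "prime p" and "z ^ p = 1"
  shows "poly (cyclotomic p) z = (if z = 1 then of_nat p else 0)"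
proof (cases "z = 1")
  case False
  have "finite {z::complex. z ^ p = 1}"
    using finite_roots_unity assms prime_gt_0_nat by auto
  then show ?thesis
    using cyclotomic_prime[OF assms(1)] assms(2) False
    by (auto simp: poly_prod intro!: prod_zero)
qed (simp add: poly_cyclotomic_prime_at_1 assms)

lemma poly_cyclotomic_1_at_1: "poly (cyclotomic 1) 1 = 0"
proof -
  have "{j\<in>{1..1::nat}. coprime j 1} = {1}"
    by auto
  then show ?thesis
    by (simp add: cyclotomic_def)
qed

lemma primitive_root_unity_power_eq_1_iff:
  assumes "primitive_root_unity n w"
  shows "w ^ k = 1 \<longleftrightarrow> n dvd k"
proof
  have n_pos: "n > 0" and w_n: "w ^ n = 1" and minimal: "\<And>k. 0 < k \<Longrightarrow> k < n \<Longrightarrow> w ^ k \<noteq> 1"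
    using assms unfolding primitive_root_unity_def by auto
  assume "w ^ k = 1"
  moreover have "w ^ k = (w ^ n) ^ (k div n) * w ^ (k mod n)"
    by (subst mult_div_mod_eq[of n k, symmetric]) (simp only: power_add power_mult)
  ultimately have "w ^ (k mod n) = 1"
    using w_n by simp
  then have "k mod n = 0"
    using minimal[of "k mod n"] n_pos by fastforce
  then show "n dvd k"
    by auto
next
  assume "n dvd k"
  then show "w ^ k = 1"
    using assms unfolding primitive_root_unity_def by (auto simp: power_mult)
qed

lemma poly_cyclotomic_prime_primitive_root_power:
  assumes w: "primitive_root_unity n w" and "prime p" and "p dvd n"
  shows "poly (cyclotomic p) ((w ^ i) ^ (n div p)) = (if p dvd i then of_nat p else 0)"
proof -
  obtain m where n_eq: "n = p * m"
    using \<open>p dvd n\<close> by blast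
  have "m > 0"
    using w n_eq unfolding primitive_root_unity_def by (cases m) auto
  have p_pos: "p > 0"
    using \<open>prime p\<close> prime_gt_0_nat by blast
  have z_eq: "(w ^ i) ^ (n div p) = w ^ (i * m)"
    using n_eq p_pos by (simp add: power_mult)
  have "(w ^ (i * m)) ^ p = 1"
    using primitive_root_unity_power_eq_1_iff[OF w] n_eq by (simp add: power_mult[symmetric])
  moreover have "w ^ (i * m) = 1 \<longleftrightarrow> p dvd i"
    using primitive_root_unity_power_eq_1_iff[OF w] n_eq \<open>m > 0\<close> by simp
  ultimately show ?thesis
    using poly_cyclotomic_prime_root_unity[OF \<open>prime p\<close>] z_eq by simp
qed

lemma
  assumes "n > 1"
  shows spf_in_prime_factors: "spf n \<in> prime_factors n"
    and gpf_in_prime_factors: "gpf n \<in> prime_factors n"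
proof -
  have "prime_factors n \<noteq> {}"
    using assms by (simp add: prime_factorization_empty_iff)
  then show "spf n \<in> prime_factors n" "gpf n \<in> prime_factors n"
    unfolding spf_def gpf_def by (auto intro: Min_in Max_in)
qed

lemma
  assumes "prime p"
  shows S_fun_gcd_prime_at_1: "S_fun (gcd p i) 1 = (if p dvd i then of_nat p else 0)"
    and G_fun_gcd_prime_at_1: "G_fun (gcd p i) 1 = (if p dvd i then of_nat p else 0)"
proof -
  have "spf p = p" "gpf p = p"
    using assms by (simp_all add: spf_def gpf_def prime_prime_factors)
  moreover have "gcd p i = (if p dvd i then p else 1)"
    using assms by (simp add: gcd_nat.absorb1 prime_imp_coprime)
  moreover have "p \<noteq> 1"
    using assms by auto
  ultimately show "S_fun (gcd p i) 1 = (if p dvd i then of_nat p else 0)"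
    "G_fun (gcd p i) 1 = (if p dvd i then of_nat p else 0)"
    using poly_cyclotomic_prime_at_1[OF assms] poly_cyclotomic_1_at_1
    by (simp_all add: S_fun_def G_fun_def)
qed

theorem theorem12:
  fixes n i :: nat and w :: complex
  assumes "n > 1" and "i \<ge> 1" and "primitive_root_unity n w"
  shows "S_fun n (w ^ i) = S_fun (gcd (spf n) i) 1 \<and> G_fun n (w ^ i) = G_fun (gcd (gpf n) i) 1"
proof
  have spf: "prime (spf n)" "spf n dvd n" and gpf: "prime (gpf n)" "gpf n dvd n"
    using spf_in_prime_factors[OF assms(1)] gpf_in_prime_factors[OF assms(1)] by auto
  have "S_fun n (w ^ i) = poly (cyclotomic (spf n)) ((w ^ i) ^ (n div spf n))"
    using assms(1) by (simp add: S_fun_def)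
  also have "\<dots> = S_fun (gcd (spf n) i) 1"
    using poly_cyclotomic_prime_primitive_root_power[OF assms(3) spf] S_fun_gcd_prime_at_1[OF spf(1)]
    by simp
  finally show "S_fun n (w ^ i) = S_fun (gcd (spf n) i) 1" .
  have "G_fun n (w ^ i) = poly (cyclotomic (gpf n)) ((w ^ i) ^ (n div gpf n))"
    using assms(1) by (simp add: G_fun_def)
  also have "\<dots> = G_fun (gcd (gpf n) i) 1"
    using poly_cyclotomic_prime_primitive_root_power[OF assms(3) gpf] G_fun_gcd_prime_at_1[OF gpf(1)]
    by simp
  finally show "G_fun n (w ^ i) = G_fun (gcd (gpf n) i) 1" .
qed

end
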